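(* Let $\mathbb F_q$ be a finite field with $q$ elements, let $n\ge 2$, let $a_1,\dots,a_n\in\mathbb F_q^*$, let $m_1,\dots,m_n$ be positive integers and put $d_j=\gcd(m_j,q-1)$ for $j=1,\dots,n$. If $d_1,\dots,d_n$ are pairwise coprime, then the number of $(x_1,\dots,x_n)\in\mathbb F_q^n$ with $x_1\cdots x_n\ne 0$ satisfying $$a_1x_1^{d_1}+\dots+a_nx_n^{d_n}=0$$ equals $$\frac{(q-1)^n+(-1)^n(q-1)}{q}.$$
   Context: $\mathbb F_q^*=\mathbb F_q\setminus\{0\}$. *)

theory Defs
  imports Complex_Main "HOL-Library.FuncSet"
begin

end

theory Submission
  imports Defs "HOL-Computational_Algebra.Nth_Powers"
begin

text \<open>
  The map \<open>x \<mapsto> (x\<^sub>j ^ d\<^sub>j)\<^sub>j\<close> is a homomorphism from \<open>(\<bbbF>\<^sub>q\<^sup>*)\<^sup>n\<close> onto the group \<open>K\<close> of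
  tuples whose \<open>j\<close>-th entry is a \<open>d\<^sub>j\<close>-th power, so all its fibres have the same size and the
  number of solutions is proportional to \<open>|T \<inter> K|\<close>, where \<open>T\<close> is the set of nonzero solutions
  of the linear equation \<open>\<Sum> a\<^sub>j y\<^sub>j = 0\<close>. The set \<open>T\<close> is stable under scaling by \<open>\<bbbF>\<^sub>q\<^sup>*\<close>, and
  pairwise coprimality (via Bezout) lets every tuple in \<open>(\<bbbF>\<^sub>q\<^sup>*)\<^sup>n\<close> be scaled into \<open>K\<close>; counting
  the pairs \<open>(t, y)\<close> with \<open>t y \<in> K\<close> shows that \<open>K\<close> fills the same proportion of \<open>T\<close> as of
  \<open>(\<bbbF>\<^sub>q\<^sup>*)\<^sup>n\<close>. Hence the diagonal and the linear equation have equally many nonzero solutions,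
  and the latter are counted by induction on \<open>n\<close>, solving for the last variable.
\<close>

lemma is_nth_power_inverse:
  fixes x :: "'a::field"
  assumes "is_nth_power n x"
  shows "is_nth_power n (inverse x)"
  using assms by (metis is_nth_powerE is_nth_powerI power_inverse)

lemma is_nth_power_divide:
  fixes x y :: "'a::field"
  assumes "is_nth_power n x" "is_nth_power n y"
  shows "is_nth_power n (x / y)"
  using assms by (simp add: divide_inverse is_nth_power_inverse is_nth_power_mult)

lemma is_nth_power_nonzero_root:
  fixes x :: "'a::field"
  assumes "is_nth_power n x" "x \<noteq> 0"
  shows "\<exists>z. z \<noteq> 0 \<and> z ^ n = x"
proof (cases "n = 0")
  case True
  with assms show ?thesis by (intro exI[of _ 1]) auto
next
  case False
  from assms(1) obtain z where "x = z ^ n" by (rule is_nth_powerE)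
  with False assms(2) show ?thesis by auto
qed

lemma common_nth_power_multiplier:
  fixes y :: "nat \<Rightarrow> 'a::field" and d :: "nat \<Rightarrow> nat"
  assumes "\<forall>j<n. d j > 0" and "\<forall>i<n. \<forall>j<n. i \<noteq> j \<longrightarrow> coprime (d i) (d j)"
    and "\<forall>j<n. y j \<noteq> 0"
  shows "\<exists>t. t \<noteq> 0 \<and> (\<forall>j<n. is_nth_power (d j) (t * y j))"
  using assms
proof (induction n)
  case 0
  show ?case by (intro exI[of _ 1]) simp
next
  case (Suc n)
  then obtain t where t: "t \<noteq> 0" "\<forall>j<n. is_nth_power (d j) (t * y j)"
    by (metis less_SucI)
  define D where "D = (\<Prod>j<n. d j)"
  have "D > 0" using Suc.prems(1) by (simp add: D_def)
  moreover have "coprime D (d n)"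
    unfolding D_def using Suc.prems(2) by (auto intro!: prod_coprime_left)
  ultimately obtain \<alpha> \<beta> where bezout: "D * \<alpha> = d n * \<beta> + 1"
    using bezout_nat[of D "d n"] by auto
  define u where "u = t * y n"
  have "u \<noteq> 0" using t Suc.prems(3) by (simp add: u_def)
  \<comment> \<open>Multiplying by \<open>s ^ D\<close> keeps the first \<open>n\<close> coordinates \<open>d j\<close>-th powers,
      and the Bezout identity makes \<open>u * s ^ D\<close> a \<open>d n\<close>-th power.\<close>
  define s where "s = inverse u ^ \<alpha>"
  have "u * s ^ D = u * inverse u * inverse u ^ (d n * \<beta>)"
    by (simp add: s_def bezout flip: power_mult[of _ \<alpha> D, unfolded mult.commute[of \<alpha>]])
  also have "\<dots> = (inverse u ^ \<beta>) ^ d n"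
    using \<open>u \<noteq> 0\<close> by (simp add: power_mult mult.commute)
  finally have last_coordinate: "is_nth_power (d n) (t * s ^ D * y n)"
    by (auto simp: u_def mult_ac)
  have "is_nth_power (d j) (t * s ^ D * y j)" if "j < n" for j
  proof -
    have "is_nth_power (d j) (s ^ D)"
      using that by (intro is_nth_power_nth_power') (simp add: D_def dvd_prodI)
    with t(2) that show ?thesis
      by (metis is_nth_power_mult mult.assoc mult.commute)
  qed
  moreover have "t * s ^ D \<noteq> 0" using t \<open>u \<noteq> 0\<close> by (simp add: s_def)
  ultimately show ?case using last_coordinate by (intro exI[of _ "t * s ^ D"]) (auto simp: less_Suc_eq)
qed

definition nonzero_tuples :: "nat \<Rightarrow> (nat \<Rightarrow> 'a::zero) set" where
  "nonzero_tuples n = PiE {..<n} (\<lambda>_. UNIV - {0})"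

definition power_map :: "nat \<Rightarrow> (nat \<Rightarrow> nat) \<Rightarrow> (nat \<Rightarrow> 'a::monoid_mult) \<Rightarrow> nat \<Rightarrow> 'a" where
  "power_map n d x = (\<lambda>j\<in>{..<n}. x j ^ d j)"

definition power_tuples :: "nat \<Rightarrow> (nat \<Rightarrow> nat) \<Rightarrow> (nat \<Rightarrow> 'a::{zero,monoid_mult}) set" where
  "power_tuples n d = {k \<in> nonzero_tuples n. \<forall>j<n. is_nth_power (d j) (k j)}"

definition scale_tuple :: "nat \<Rightarrow> 'a::times \<Rightarrow> (nat \<Rightarrow> 'a) \<Rightarrow> nat \<Rightarrow> 'a" where
  "scale_tuple n t y = (\<lambda>j\<in>{..<n}. t * y j)"

lemma mem_nonzero_tuples_iff:
  "x \<in> nonzero_tuples n \<longleftrightarrow> (\<forall>j<n. x j \<noteq> 0) \<and> (\<forall>j\<ge>n. x j = undefined)"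
  by (auto simp: nonzero_tuples_def PiE_iff extensional_def)

lemma finite_nonzero_tuples [simp]: "finite (nonzero_tuples n :: (nat \<Rightarrow> 'a::{zero,finite}) set)"
  unfolding nonzero_tuples_def by (rule finite_PiE) auto

lemma card_nonzero_tuples:
  "card (nonzero_tuples n :: (nat \<Rightarrow> 'a::{zero,finite}) set) = (card (UNIV :: 'a set) - 1) ^ n"
  unfolding nonzero_tuples_def by (simp add: card_PiE card_Diff_singleton)

lemma power_map_in_power_tuples:
  fixes x :: "nat \<Rightarrow> 'a::field"
  shows "x \<in> nonzero_tuples n \<Longrightarrow> power_map n d x \<in> power_tuples n d"
  by (auto simp: power_tuples_def power_map_def mem_nonzero_tuples_iff)

lemma scale_tuple_in_nonzero_tuples:
  fixes y :: "nat \<Rightarrow> 'a::field"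
  shows "y \<in> nonzero_tuples n \<Longrightarrow> t \<noteq> 0 \<Longrightarrow> scale_tuple n t y \<in> nonzero_tuples n"
  by (auto simp: scale_tuple_def mem_nonzero_tuples_iff)

lemma scale_tuple_inverse:
  fixes y :: "nat \<Rightarrow> 'a::field"
  shows "y \<in> nonzero_tuples n \<Longrightarrow> t \<noteq> 0 \<Longrightarrow> scale_tuple n (inverse t) (scale_tuple n t y) = y"
  by (auto simp: scale_tuple_def mem_nonzero_tuples_iff fun_eq_iff)

lemma power_map_eq_iff:
  "k \<in> nonzero_tuples n \<Longrightarrow> power_map n d x = k \<longleftrightarrow> (\<forall>j<n. x j ^ d j = k j)"
  by (auto simp: power_map_def mem_nonzero_tuples_iff fun_eq_iff)

lemma card_power_map_fiber:
  fixes k :: "nat \<Rightarrow> 'a::field"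
  assumes k: "k \<in> power_tuples n d"
  shows "card {x \<in> nonzero_tuples n. power_map n d x = k}
       = card {x \<in> nonzero_tuples n. power_map n d x = (\<lambda>j\<in>{..<n}. 1 :: 'a)}"
proof -
  have "\<forall>j<n. \<exists>z. z \<noteq> 0 \<and> z ^ d j = k j"
    using k by (auto simp: power_tuples_def mem_nonzero_tuples_iff intro: is_nth_power_nonzero_root)
  then obtain r where r: "\<And>j. j < n \<Longrightarrow> r j \<noteq> 0 \<and> r j ^ d j = k j"
    by metis
  have "k \<in> nonzero_tuples n" using k by (simp add: power_tuples_def)
  moreover have "(\<lambda>j\<in>{..<n}. 1) \<in> (nonzero_tuples n :: (nat \<Rightarrow> 'a) set)"
    by (simp add: mem_nonzero_tuples_iff)
  ultimately have "bij_betw (\<lambda>x. \<lambda>j\<in>{..<n}. r j * x j)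
      {x \<in> nonzero_tuples n. power_map n d x = (\<lambda>j\<in>{..<n}. 1)}
      {x \<in> nonzero_tuples n. power_map n d x = k}"
    using r by (intro bij_betw_byWitness[where f' = "\<lambda>x. \<lambda>j\<in>{..<n}. x j / r j"])
      (auto simp: power_map_eq_iff mem_nonzero_tuples_iff power_mult_distrib power_divide)
  from bij_betw_same_card[OF this] show ?thesis by (rule sym)
qed

lemma card_power_map_preimage:
  fixes U :: "(nat \<Rightarrow> 'a::{field,finite}) set"
  shows "card {x \<in> nonzero_tuples n. power_map n d x \<in> U}
       = card {x \<in> nonzero_tuples n. power_map n d x = (\<lambda>j\<in>{..<n}. 1 :: 'a)}
         * card (U \<inter> power_tuples n d)"
proof -
  have "{x \<in> nonzero_tuples n. power_map n d x \<in> U}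
      = (\<Union>k \<in> U \<inter> power_tuples n d. {x \<in> nonzero_tuples n. power_map n d x = k})"
    using power_map_in_power_tuples by blast
  also have "card \<dots> = (\<Sum>k \<in> U \<inter> power_tuples n d. card {x \<in> nonzero_tuples n. power_map n d x = k})"
    by (rule card_UN_disjoint)
      (auto intro: finite_subset[OF _ finite_nonzero_tuples] simp: power_tuples_def)
  also have "\<dots> = (\<Sum>k \<in> U \<inter> power_tuples n d.
                    card {x \<in> nonzero_tuples n. power_map n d x = (\<lambda>j\<in>{..<n}. 1 :: 'a)})"
    by (rule sum.cong) (auto intro: card_power_map_fiber)
  finally show ?thesis by simp
qed

lemma card_scaled_into_power_tuples:
  fixes U :: "(nat \<Rightarrow> 'a::field) set"
  assumes "U \<subseteq> nonzero_tuples n" and "\<And>t y. t \<noteq> 0 \<Longrightarrow> y \<in> U \<Longrightarrow> scale_tuple n t y \<in> U"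
    and "t \<noteq> 0"
  shows "card {y \<in> U. scale_tuple n t y \<in> power_tuples n d} = card (U \<inter> power_tuples n d)"
proof -
  have "bij_betw (scale_tuple n t) {y \<in> U. scale_tuple n t y \<in> power_tuples n d} (U \<inter> power_tuples n d)"
    using assms scale_tuple_inverse[of _ n t] scale_tuple_inverse[of _ n "inverse t"]
    by (intro bij_betw_byWitness[where f' = "scale_tuple n (inverse t)"])
      (auto simp: power_tuples_def subset_iff)
  then show ?thesis by (rule bij_betw_same_card)
qed

lemma card_scalars_into_power_tuples:
  fixes y :: "nat \<Rightarrow> 'a::field" and d :: "nat \<Rightarrow> nat"
  assumes "\<forall>j<n. d j > 0" and "\<forall>i<n. \<forall>j<n. i \<noteq> j \<longrightarrow> coprime (d i) (d j)"
    and y: "y \<in> nonzero_tuples n"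
  shows "card {t. t \<noteq> 0 \<and> scale_tuple n t y \<in> power_tuples n d}
       = card {s :: 'a. s \<noteq> 0 \<and> (\<forall>j<n. is_nth_power (d j) s)}"
proof -
  have y_nonzero: "\<forall>j<n. y j \<noteq> 0" using y by (simp add: mem_nonzero_tuples_iff)
  then obtain t0 where t0: "t0 \<noteq> 0" "\<forall>j<n. is_nth_power (d j) (t0 * y j)"
    using common_nth_power_multiplier[OF assms(1,2)] by blast
  have scaled_iff: "scale_tuple n t y \<in> power_tuples n d \<longleftrightarrow> (\<forall>j<n. is_nth_power (d j) (t * y j))"
    if "t \<noteq> 0" for t
    using scale_tuple_in_nonzero_tuples[OF y that] by (auto simp: power_tuples_def scale_tuple_def)
  have shift: "is_nth_power (d j) (s * (t0 * y j)) \<longleftrightarrow> is_nth_power (d j) s" if "j < n" for j s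
  proof
    assume "is_nth_power (d j) (s * (t0 * y j))"
    then have "is_nth_power (d j) (s * (t0 * y j) / (t0 * y j))"
      using t0(2) that by (intro is_nth_power_divide) auto
    then show "is_nth_power (d j) s" using t0(1) y_nonzero that by simp
  next
    assume "is_nth_power (d j) s"
    then show "is_nth_power (d j) (s * (t0 * y j))"
      using t0(2) that by (blast intro: is_nth_power_mult)
  qed
  have "is_nth_power (d j) (t * y j) \<longleftrightarrow> is_nth_power (d j) (t / t0)" if "j < n" for j t
    using shift[OF that, of "t / t0"] t0(1) by simp
  then have "{t. t \<noteq> 0 \<and> scale_tuple n t y \<in> power_tuples n d}
           = {t. t \<noteq> 0 \<and> (\<forall>j<n. is_nth_power (d j) (t / t0))}"
    by (auto simp: scaled_iff)
  moreover have "bij_betw (\<lambda>s. s * t0) {s. s \<noteq> 0 \<and> (\<forall>j<n. is_nth_power (d j) s)}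
                 {t. t \<noteq> 0 \<and> (\<forall>j<n. is_nth_power (d j) (t / t0))}"
    using t0(1) by (intro bij_betw_byWitness[where f' = "\<lambda>t. t / t0"]) auto
  ultimately show ?thesis by (simp add: bij_betw_same_card)
qed

lemma card_scaling_invariant_inter_power_tuples:
  fixes U :: "(nat \<Rightarrow> 'a::{field,finite}) set" and d :: "nat \<Rightarrow> nat"
  assumes "\<forall>j<n. d j > 0" and "\<forall>i<n. \<forall>j<n. i \<noteq> j \<longrightarrow> coprime (d i) (d j)"
    and U: "U \<subseteq> nonzero_tuples n"
    and scale: "\<And>t y. t \<noteq> 0 \<Longrightarrow> y \<in> U \<Longrightarrow> scale_tuple n t y \<in> U"
  shows "(card (UNIV :: 'a set) - 1) * card (U \<inter> power_tuples n d)
       = card U * card {s :: 'a. s \<noteq> 0 \<and> (\<forall>j<n. is_nth_power (d j) s)}"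
proof -
  let ?R = "\<lambda>t y. scale_tuple n t y \<in> power_tuples n d"
  have "finite U" using U by (rule finite_subset) simp
  have "(\<Sum>t \<in> UNIV - {0}. card {y \<in> U. ?R t y}) = (\<Sum>y \<in> U. card {t \<in> UNIV - {0}. ?R t y})"
    unfolding card_eq_sum using \<open>finite U\<close> by (intro sum.swap_restrict) simp_all
  moreover have "card {y \<in> U. ?R t y} = card (U \<inter> power_tuples n d)" if "t \<in> UNIV - {0}" for t
    using card_scaled_into_power_tuples[OF U scale, of t d] that by simp
  moreover have "card {t \<in> UNIV - {0}. ?R t y} = card {s :: 'a. s \<noteq> 0 \<and> (\<forall>j<n. is_nth_power (d j) s)}"
    if "y \<in> U" for y
    using card_scalars_into_power_tuples[OF assms(1,2), of y] U that by (simp add: subset_iff)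
  ultimately show ?thesis by (simp add: card_Diff_singleton)
qed

lemma card_power_tuples_proportion:
  fixes U :: "(nat \<Rightarrow> 'a::{field,finite}) set" and d :: "nat \<Rightarrow> nat"
  assumes dpos: "\<forall>j<n. d j > 0" and coprime: "\<forall>i<n. \<forall>j<n. i \<noteq> j \<longrightarrow> coprime (d i) (d j)"
    and U: "U \<subseteq> nonzero_tuples n"
    and scale: "\<And>t y. t \<noteq> 0 \<Longrightarrow> y \<in> U \<Longrightarrow> scale_tuple n t y \<in> U"
  shows "card (U \<inter> power_tuples n d) * card (nonzero_tuples n :: (nat \<Rightarrow> 'a) set)
       = card U * card (power_tuples n d :: (nat \<Rightarrow> 'a) set)"
proof -
  let ?V = "nonzero_tuples n :: (nat \<Rightarrow> 'a) set"
  let ?A = "card {s :: 'a. s \<noteq> 0 \<and> (\<forall>j<n. is_nth_power (d j) s)}"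
  let ?q = "card (UNIV :: 'a set)"
  have "power_tuples n d \<subseteq> ?V" by (auto simp: power_tuples_def)
  have "scale_tuple n t y \<in> ?V" if "t \<noteq> 0" "y \<in> ?V" for t y
    using that by (simp add: scale_tuple_in_nonzero_tuples)
  from card_scaling_invariant_inter_power_tuples[OF dpos coprime _ this]
  have V_ratio: "(?q - 1) * card (power_tuples n d :: (nat \<Rightarrow> 'a) set) = card ?V * ?A"
    using \<open>power_tuples n d \<subseteq> ?V\<close> by (simp add: Int_absorb1)
  have "(?q - 1) * (card (U \<inter> power_tuples n d) * card ?V)
      = ((?q - 1) * card (U \<inter> power_tuples n d)) * card ?V"
    by (rule mult.assoc[symmetric])
  also have "\<dots> = card U * ?A * card ?V"
    using card_scaling_invariant_inter_power_tuples[OF dpos coprime U scale] by simp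
  also have "\<dots> = card U * (card ?V * ?A)"
    by (simp add: mult_ac)
  also have "\<dots> = card U * ((?q - 1) * card (power_tuples n d :: (nat \<Rightarrow> 'a) set))"
    by (simp only: V_ratio)
  also have "\<dots> = (?q - 1) * (card U * card (power_tuples n d :: (nat \<Rightarrow> 'a) set))"
    by (rule mult.left_commute)
  finally have "(?q - 1) * (card (U \<inter> power_tuples n d) * card ?V)
      = (?q - 1) * (card U * card (power_tuples n d :: (nat \<Rightarrow> 'a) set))" .
  moreover have "?q \<ge> 2" using card_mono[of "UNIV :: 'a set" "{0, 1}"] by simp
  ultimately show ?thesis by simp
qed

lemma card_power_map_preimage_scaling_invariant:
  fixes U :: "(nat \<Rightarrow> 'a::{field,finite}) set" and d :: "nat \<Rightarrow> nat"
  assumes dpos: "\<forall>j<n. d j > 0" and coprime: "\<forall>i<n. \<forall>j<n. i \<noteq> j \<longrightarrow> coprime (d i) (d j)"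
    and U: "U \<subseteq> nonzero_tuples n"
    and scale: "\<And>t y. t \<noteq> 0 \<Longrightarrow> y \<in> U \<Longrightarrow> scale_tuple n t y \<in> U"
  shows "card {x \<in> nonzero_tuples n. power_map n d x \<in> U} = card U"
proof -
  let ?V = "nonzero_tuples n :: (nat \<Rightarrow> 'a) set"
  let ?K = "power_tuples n d :: (nat \<Rightarrow> 'a) set"
  let ?c = "card {x \<in> ?V. power_map n d x = (\<lambda>j\<in>{..<n}. 1 :: 'a)}"
  have "?K \<subseteq> ?V" by (auto simp: power_tuples_def)
  have "{x \<in> ?V. power_map n d x \<in> ?V} = ?V"
    using \<open>?K \<subseteq> ?V\<close> by (auto dest: power_map_in_power_tuples)
  then have V: "card ?V = ?c * card ?K"
    using card_power_map_preimage[of n d ?V] \<open>?K \<subseteq> ?V\<close> by (simp add: Int_absorb1)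
  have "(\<lambda>j\<in>{..<n}. 1) \<in> ?K" by (simp add: power_tuples_def mem_nonzero_tuples_iff)
  moreover have "finite ?K" using \<open>?K \<subseteq> ?V\<close> by (rule finite_subset) simp
  ultimately have "card ?K > 0" by (auto simp: card_gt_0_iff)
  moreover have "card {x \<in> ?V. power_map n d x \<in> U} * card ?K = card (U \<inter> ?K) * card ?V"
    by (simp add: card_power_map_preimage V)
  ultimately show ?thesis
    using card_power_tuples_proportion[OF dpos coprime U scale] by simp
qed

lemma card_linear_zero_Suc:
  fixes a :: "nat \<Rightarrow> 'a::field"
  assumes "a n \<noteq> 0"
  shows "card {y \<in> nonzero_tuples (Suc n). (\<Sum>j<Suc n. a j * y j) = 0}
       = card {z \<in> nonzero_tuples n. (\<Sum>j<n. a j * z j) \<noteq> 0}"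
proof -
  let ?s = "\<lambda>z. \<Sum>j<n. a j * z j"
  have s_restrict: "?s (restrict y {..<n}) = ?s y" for y :: "nat \<Rightarrow> 'a"
    by (rule sum.cong) auto
  have s_upd: "?s (z(n := c)) = ?s z" for z :: "nat \<Rightarrow> 'a" and c
    by (rule sum.cong) auto
  \<comment> \<open>The last coordinate of a solution is determined by the others, and is nonzero
      exactly when their partial sum is.\<close>
  have "bij_betw (\<lambda>y. restrict y {..<n})
      {y \<in> nonzero_tuples (Suc n). ?s y + a n * y n = 0} {z \<in> nonzero_tuples n. ?s z \<noteq> 0}"
    using assms
    by (intro bij_betw_byWitness[where f' = "\<lambda>z. z(n := - ?s z / a n)"])
      (auto simp: mem_nonzero_tuples_iff fun_eq_iff s_restrict s_upd field_simps add_eq_0_iff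
            less_Suc_eq)
  then show ?thesis by (simp add: bij_betw_same_card)
qed

lemma card_linear_zero:
  fixes a :: "nat \<Rightarrow> 'a::{field,finite}"
  assumes "\<forall>j<n. a j \<noteq> 0"
  shows "real (card {y \<in> nonzero_tuples n. (\<Sum>j<n. a j * y j) = 0}) * real (card (UNIV :: 'a set))
       = (real (card (UNIV :: 'a set)) - 1) ^ n + (-1) ^ n * (real (card (UNIV :: 'a set)) - 1)"
  using assms
proof (induction n)
  case 0
  have "nonzero_tuples 0 = {(\<lambda>_. undefined) :: nat \<Rightarrow> 'a}"
    by (simp add: nonzero_tuples_def)
  then show ?case by (simp add: algebra_simps)
next
  case (Suc n)
  let ?q = "real (card (UNIV :: 'a set))"
  let ?V = "nonzero_tuples n :: (nat \<Rightarrow> 'a) set"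
  let ?Z = "{z \<in> ?V. (\<Sum>j<n. a j * z j) = 0}"
  have "card {y \<in> nonzero_tuples (Suc n). (\<Sum>j<Suc n. a j * y j) = 0}
      = card {z \<in> ?V. (\<Sum>j<n. a j * z j) \<noteq> 0}"
    using Suc.prems by (intro card_linear_zero_Suc) simp
  also have "{z \<in> ?V. (\<Sum>j<n. a j * z j) \<noteq> 0} = ?V - ?Z" by blast
  finally have "card {y \<in> nonzero_tuples (Suc n). (\<Sum>j<Suc n. a j * y j) = 0} = card ?V - card ?Z"
    by (simp add: card_Diff_subset)
  moreover have "card ?Z \<le> card ?V" by (rule card_mono) auto
  moreover have "card ?V = (card (UNIV :: 'a set) - 1) ^ n" by (rule card_nonzero_tuples)
  moreover have "card (UNIV :: 'a set) \<ge> 1"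
    by (simp add: Suc_leI finite_UNIV_card_ge_0)
  ultimately have "real (card {y \<in> nonzero_tuples (Suc n). (\<Sum>j<Suc n. a j * y j) = 0}) * ?q
      = (?q - 1) ^ n * ?q - real (card ?Z) * ?q"
    by (simp add: of_nat_diff left_diff_distrib)
  also have "\<dots> = (?q - 1) ^ n * ?q - ((?q - 1) ^ n + (-1) ^ n * (?q - 1))"
    using Suc by simp
  also have "\<dots> = (?q - 1) ^ Suc n + (-1) ^ Suc n * (?q - 1)"
    by (simp add: algebra_simps)
  finally show ?case .
qed

theorem card_diagonal_zero_eq_card_linear_zero:
  fixes a :: "nat \<Rightarrow> 'a::{field,finite}" and d :: "nat \<Rightarrow> nat"
  assumes "\<forall>j<n. d j > 0" and "\<forall>i<n. \<forall>j<n. i \<noteq> j \<longrightarrow> coprime (d i) (d j)"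
  shows "card {x \<in> nonzero_tuples n. (\<Sum>j<n. a j * x j ^ d j) = 0}
       = card {y \<in> nonzero_tuples n. (\<Sum>j<n. a j * y j) = 0}"
proof -
  let ?T = "{y \<in> nonzero_tuples n. (\<Sum>j<n. a j * y j) = 0}"
  have "scale_tuple n t y \<in> ?T" if "t \<noteq> 0" "y \<in> ?T" for t y
  proof -
    have "(\<Sum>j<n. a j * scale_tuple n t y j) = t * (\<Sum>j<n. a j * y j)"
      by (simp add: scale_tuple_def sum_distrib_left mult_ac)
    then show ?thesis using that scale_tuple_in_nonzero_tuples by auto
  qed
  then have "card {x \<in> nonzero_tuples n. power_map n d x \<in> ?T} = card ?T"
    by (intro card_power_map_preimage_scaling_invariant[OF assms]) auto
  moreover have "{x \<in> nonzero_tuples n. power_map n d x \<in> ?T}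
      = {x \<in> nonzero_tuples n. (\<Sum>j<n. a j * x j ^ d j) = 0}"
  proof -
    have "(\<Sum>j<n. a j * power_map n d x j) = (\<Sum>j<n. a j * x j ^ d j)" for x
      by (simp add: power_map_def)
    then show ?thesis by (auto dest: power_map_in_power_tuples simp: power_tuples_def)
  qed
  ultimately show ?thesis by simp
qed

theorem corollary1:
  fixes a :: "nat \<Rightarrow> 'a :: {finite, field}"
    and m :: "nat \<Rightarrow> nat"
    and n :: nat
  defines "q \<equiv> card (UNIV :: 'a set)"
  defines "d \<equiv> (\<lambda>j. gcd (m j) (q - 1))"
  assumes "n \<ge> 2"
    and "\<forall>j<n. a j \<noteq> 0"
    and "\<forall>j<n. m j > 0"
    and "\<forall>i<n. \<forall>j<n. i \<noteq> j \<longrightarrow> coprime (d i) (d j)"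
  shows "real (card {x \<in> Pi\<^sub>E {..<n} (\<lambda>_. UNIV - {0}).
                       (\<Sum>j<n. a j * x j ^ d j) = 0})
         = ((real q - 1) ^ n + (-1) ^ n * (real q - 1)) / real q"
proof -
  have "\<forall>j<n. d j > 0" using assms(5) by (simp add: d_def)
  then have "card {x \<in> Pi\<^sub>E {..<n} (\<lambda>_. UNIV - {0}). (\<Sum>j<n. a j * x j ^ d j) = 0}
      = card {y \<in> nonzero_tuples n. (\<Sum>j<n. a j * y j) = 0}"
    unfolding nonzero_tuples_def[symmetric] using assms(6) by (rule card_diagonal_zero_eq_card_linear_zero)
  moreover have "real q > 0" by (simp add: q_def finite_UNIV_card_ge_0)
  ultimately show ?thesis
    using card_linear_zero[OF assms(4)] by (simp add: q_def field_simps)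
qed

end
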